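(* Let $T\in(0,\infty)$, and let $\mu_T$, $\mu_T^{(N)}$ ($N\in\mathbb{N}$) and $\nu_k^{\Delta t}$ ($k\in\mathbb{N}_0$, $\Delta t\in(0,1)$) be the probability distributions on $H=L^2(0,1)$ defined in the context. Then \[ \limsup_{N\to\infty}\ \sup_{\phi\in\mathcal{C}^0(H,\mathbb{R}),\ \|\phi\|_0\le 1}\Big|\int_H\phi\,d\mu_T-\int_H\phi\,d\mu_T^{(N)}\Big|>0, \] and \[ \limsup_{\Delta t\to 0}\ \sup_{\phi\in\mathcal{C}^0(H,\mathbb{R}),\ \|\phi\|_0\le 1}\Big|\int_H\phi\,d\mu_T-\int_H\phi\,d\nu_{\lfloor T/\Delta t\rfloor}^{\Delta t}\Big|>0. \]
   Context: Let $H=L^2(0,1)$ with inner product $\langle\cdot,\cdot\rangle$ and norm $|\cdot|$. For $n\in\mathbb{N}=\{1,2,\ldots\}$ let $\lambda_n=\pi^2n^2$ and $e_n=\sqrt2\sin(n\pi\,\cdot)$, a complete orthonormal system of $H$. Let $A$ be the self-adjoint operator $Ax=-\sum_{n}\lambda_n\langle x,e_n\rangle e_n$ on $D(A)=\{x\in H:\sum_n\lambda_n^2\langle x,e_n\rangle^2<\infty\}$ (Dirichlet Laplacian), generating the semigroup $e^{tA}x=\sum_n e^{-\lambda_nt}\langle x,e_n\rangle e_n$. Let $(\beta_n)_{n\in\mathbb{N}}$ be independent standard real Wiener processes on a probability space and $W(t)=\sum_n\beta_n(t)e_n$ the cylindrical Wiener process. Let $X(t)=\int_0^te^{(t-s)A}dW(s)=\sum_n\big(\int_0^te^{-\lambda_n(t-s)}d\beta_n(s)\big)e_n$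 be the mild solution of $dX=AX\,dt+dW$, $X(0)=0$, and let $\mu_t$ denote the law of $X(t)$ (a centered Gaussian measure on $H$ with covariance $Q_te_n=\frac{1}{2\lambda_n}(1-e^{-2\lambda_nt})e_n$). Spectral Galerkin discretization: for $N\in\mathbb{N}$, $P_N$ is the orthogonal projection onto $\mathrm{Span}(e_1,\ldots,e_N)$, $X^{(N)}(t)=P_NX(t)$ (the solution of $dX^{(N)}=AX^{(N)}dt+P_NdW$, $X^{(N)}(0)=0$), and $\mu_t^{(N)}$ is the law of $X^{(N)}(t)$. Linear implicit Euler scheme: for $\Delta t\in(0,1)$, let $S_{\Delta t}=(I-\Delta tA)^{-1}$, $X_0^{\Delta t}=0$, $X_{k+1}^{\Delta t}=S_{\Delta t}X_k^{\Delta t}+S_{\Delta t}\big(W((k+1)\Delta t)-W(k\Delta t)\big)$ for $k\in\mathbb{N}_0$ (so $X_k^{\Delta t}=\sum_{\ell=0}^{k-1}S_{\Delta t}^{k-\ell}(W((\ell+1)\Delta t)-W(\ell\Delta t))$), and $\nu_k^{\Delta t}$ is the law of $X_k^{\Delta t}$ (centered Gaussian with covariance $\Delta t\sum_{\ell=0}^{k-1}S_{\Delta t}^{2(k-\ell)}$). $\mathcal{C}^0(H,\mathbb{R})$ denotes the bounded continuous functions $H\to\mathbb{R}$, with $\|\phi\|_0=\sup_{x\in H}|\phi(x)|$. *)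

theory Defs
  imports "HOL-Probability.Probability"
begin

text \<open>The Hilbert space H = L2(0,1) is represented through its coordinates in the
  orthonormal basis e_n = sqrt 2 sin(n pi .): coordinate i (i = 0,1,2,...) of a point
  corresponds to the coefficient w.r.t. e_(i+1). This is an isometric isomorphism of H
  onto the sequence space l2.\<close>

definition Hsp :: "(nat \<Rightarrow> real) set" where
  "Hsp = {x. summable (\<lambda>i. (x i)\<^sup>2)}"

definition Hdist :: "(nat \<Rightarrow> real) \<Rightarrow> (nat \<Rightarrow> real) \<Rightarrow> real" where
  "Hdist x y = sqrt (\<Sum>i. (x i - y i)\<^sup>2)"

definition H_continuous :: "((nat \<Rightarrow> real) \<Rightarrow> real) \<Rightarrow> bool" where
  "H_continuous \<phi> \<longleftrightarrow>
     (\<forall>x\<in>Hsp. \<forall>e>0. \<exists>d>0. \<forall>y\<in>Hsp. Hdist x y < d \<longrightarrow> \<bar>\<phi> y - \<phi> x\<bar> < e)"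

text \<open>Eigenvalue of -A belonging to coordinate i, i.e. to e_(i+1).\<close>
definition eig :: "nat \<Rightarrow> real" where
  "eig i = pi\<^sup>2 * (real (Suc i))\<^sup>2"

definition gauss1 :: "real \<Rightarrow> real measure" where
  "gauss1 v = (if v = 0 then return borel 0 else density lborel (normal_density 0 (sqrt v)))"

text \<open>Centered Gaussian measure on H with diagonal covariance Q e_(i+1) = q i e_(i+1):
  the coordinates are independent centered Gaussians with variances q i.\<close>
definition gaussH :: "(nat \<Rightarrow> real) \<Rightarrow> (nat \<Rightarrow> real) measure" where
  "gaussH q = restrict_space (\<Pi>\<^sub>M i\<in>UNIV. gauss1 (q i)) Hsp"

text \<open>mu_t : law of X(t); covariance Q_t.\<close>
definition mu :: "real \<Rightarrow> (nat \<Rightarrow> real) measure" where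
  "mu t = gaussH (\<lambda>i. (1 - exp (- 2 * eig i * t)) / (2 * eig i))"

text \<open>mu_t^(N) : law of P_N X(t) (coordinates e_1..e_N kept).\<close>
definition muN :: "nat \<Rightarrow> real \<Rightarrow> (nat \<Rightarrow> real) measure" where
  "muN N t = gaussH (\<lambda>i. if i < N then (1 - exp (- 2 * eig i * t)) / (2 * eig i) else 0)"

text \<open>nu_k^dt : law of the linear implicit Euler iterate; covariance
  dt * sum_(l=0)^(k-1) S_dt^(2(k-l)), with S_dt e_(i+1) = (1 + dt eig i)^-1 e_(i+1).\<close>
definition nu :: "real \<Rightarrow> nat \<Rightarrow> (nat \<Rightarrow> real) measure" where
  "nu dt k = gaussH (\<lambda>i. dt * (\<Sum>l<k. (1 / (1 + dt * eig i)) ^ (2 * (k - l))))"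

definition C0dist :: "(nat \<Rightarrow> real) measure \<Rightarrow> (nat \<Rightarrow> real) measure \<Rightarrow> real" where
  "C0dist P Q = Sup {\<bar>(\<integral>x. \<phi> x \<partial>P) - (\<integral>x. \<phi> x \<partial>Q)\<bar> | \<phi>.
      H_continuous \<phi> \<and> (\<forall>x\<in>Hsp. \<bar>\<phi> x\<bar> \<le> 1)}"

end

theory Submission
  imports Defs
begin

text \<open>All the laws involved are centered Gaussians on H with diagonal covariance, so it suffices
  to find a single coordinate whose variance under the approximation is at most a sixteenth of its
  variance under \<open>\<mu>\<^sub>T\<close>. The bounded continuous test function \<open>x \<mapsto> cos (t x\<^sub>i)\<close> has mean
  \<open>exp (- t\<^sup>2 q\<^sub>i / 2)\<close> under a diagonal Gaussian with variances \<open>q\<close>; choosing \<open>t\<close> such that this is \<open>1/4\<close> for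
  \<open>\<mu>\<^sub>T\<close>, the approximate mean is at least \<open>7/8\<close>, so the distance is at least \<open>1/2\<close>. For the Galerkin
  projection, coordinate \<open>N\<close> has variance \<open>0\<close>. For the Euler scheme with \<open>k \<Delta>t \<le> T\<close> the variance of
  coordinate \<open>i\<close> is at most \<open>T / (\<Delta>t \<lambda>\<^sub>i)\<^sup>2\<close>, whereas under \<open>\<mu>\<^sub>T\<close> it is of order \<open>1 / \<lambda>\<^sub>i\<close>; high enough
  modes are therefore badly approximated however small \<open>\<Delta>t\<close> is.\<close>

lemma integral_cos_normal_density:
  assumes "\<sigma> > 0"
  shows "(\<integral>y. cos (t * y) \<partial>density lborel (normal_density 0 \<sigma>)) = exp (- (t * \<sigma>)\<^sup>2 / 2)"
proof -
  interpret S: prob_space std_normal_distribution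
    using real_dist_normal_dist by (simp add: real_distribution_def)
  have std: "distributed std_normal_distribution lborel (\<lambda>x. x) (normal_density 0 1)"
    unfolding distributed_def by (simp add: distr_id2 cong: distr_cong)
  have "distributed std_normal_distribution lborel (\<lambda>x. 0 + \<sigma> * x)
      (normal_density (0 + \<sigma> * 0) (\<bar>\<sigma>\<bar> * 1))"
    by (rule S.normal_density_affine[OF std]) (use assms in auto)
  then have scaled: "density lborel (normal_density 0 \<sigma>) =
      distr std_normal_distribution lborel (\<lambda>x. \<sigma> * x)"
    using assms by (simp add: distributed_def)
  have "(\<integral>y. cos (t * y) \<partial>density lborel (normal_density 0 \<sigma>)) =
      (\<integral>x. Re (iexp ((t * \<sigma>) * x)) \<partial>std_normal_distribution)"
    unfolding scaled by (subst integral_distr) (auto simp: cos_exp_eq Re_exp mult.assoc)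
  also have "\<dots> = Re (char std_normal_distribution (t * \<sigma>))"
    unfolding char_def by (rule integral_Re) (rule S.integrable_iexp, auto)
  also have "\<dots> = exp (- (t * \<sigma>)\<^sup>2 / 2)"
    by (simp add: char_std_normal_distribution)
  finally show ?thesis .
qed

lemma integral_cos_gauss1:
  assumes "v \<ge> 0"
  shows "(\<integral>y. cos (t * y) \<partial>gauss1 v) = exp (- t\<^sup>2 * v / 2)"
proof (cases "v = 0")
  case True
  then show ?thesis by (simp add: gauss1_def integral_return)
next
  case False
  then have "sqrt v > 0" using assms by simp
  from integral_cos_normal_density[OF this, of t] show ?thesis
    using False assms by (simp add: gauss1_def power_mult_distrib)
qed

lemma prob_space_gauss1: "v \<ge> 0 \<Longrightarrow> prob_space (gauss1 v)"
  by (auto simp: gauss1_def prob_space_return intro: prob_space_normal_density)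

lemma sets_gauss1 [simp, measurable_cong]: "sets (gauss1 v) = sets borel"
  by (simp add: gauss1_def)

lemma space_gauss1 [simp]: "space (gauss1 v) = UNIV"
  by (simp add: gauss1_def)

lemma nn_integral_square_gauss1:
  assumes "v \<ge> 0"
  shows "(\<integral>\<^sup>+ y. ennreal (y\<^sup>2) \<partial>gauss1 v) = ennreal v"
proof (cases "v = 0")
  case True
  then show ?thesis by (simp add: gauss1_def nn_integral_return)
next
  case False
  then have "sqrt v > 0" using assms by simp
  from normal_moment_even[OF this, of 0 1]
  have moment: "has_bochner_integral lborel (\<lambda>y. normal_density 0 (sqrt v) y * y\<^sup>2) v"
    using assms by (simp add: power2_eq_square)
  have "(\<integral>\<^sup>+ y. ennreal (y\<^sup>2) \<partial>gauss1 v) =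
      (\<integral>\<^sup>+ y. ennreal (normal_density 0 (sqrt v) y * y\<^sup>2) \<partial>lborel)"
    using False by (simp add: gauss1_def nn_integral_density ennreal_mult')
  also have "\<dots> = ennreal v"
    using moment by (subst nn_integral_eq_integral) (auto simp: has_bochner_integral_iff)
  finally show ?thesis .
qed

lemma prob_space_PiM_gauss1:
  "(\<And>i. q i \<ge> 0) \<Longrightarrow> prob_space (\<Pi>\<^sub>M i\<in>UNIV. gauss1 (q i))"
  by (rule prob_space_PiM) (auto intro: prob_space_gauss1)

lemma Hsp_eq_finite_square_sum: "Hsp = {x. (\<Sum>i. ennreal ((x i)\<^sup>2)) \<noteq> \<top>}"
proof (intro set_eqI iffI)
  fix x :: "nat \<Rightarrow> real"
  assume "x \<in> Hsp"
  then show "x \<in> {x. (\<Sum>i. ennreal ((x i)\<^sup>2)) \<noteq> \<top>}"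
    unfolding Hsp_def by (simp add: ennreal_suminf_neq_top)
qed (auto simp: Hsp_def intro: summable_suminf_not_top)

lemma Hsp_in_sets_PiM_gauss1: "Hsp \<in> sets (\<Pi>\<^sub>M i\<in>UNIV. gauss1 (q i))"
proof -
  have "{x \<in> space (\<Pi>\<^sub>M i\<in>UNIV. gauss1 (q i)). (\<Sum>i. ennreal ((x i)\<^sup>2)) \<noteq> \<top>}
      \<in> sets (\<Pi>\<^sub>M i\<in>UNIV. gauss1 (q i))"
    by measurable
  then show ?thesis
    unfolding Hsp_eq_finite_square_sum by (simp add: space_PiM)
qed

text \<open>The expected squared norm is the trace \<open>\<Sum>i. q i\<close> of the covariance, hence finite.\<close>
lemma AE_PiM_gauss1_Hsp:
  assumes q: "\<And>i. q i \<ge> 0" "summable q"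
  shows "AE x in (\<Pi>\<^sub>M i\<in>UNIV. gauss1 (q i)). x \<in> Hsp"
proof -
  let ?M = "\<Pi>\<^sub>M i\<in>UNIV. gauss1 (q i)"
  have "(\<integral>\<^sup>+ x. (\<Sum>i. ennreal ((x i)\<^sup>2)) \<partial>?M) = (\<Sum>i. \<integral>\<^sup>+ x. ennreal ((x i)\<^sup>2) \<partial>?M)"
    by (rule nn_integral_suminf) measurable
  also have "\<dots> = (\<Sum>i. ennreal (q i))"
  proof (rule suminf_cong)
    fix i
    have "(\<integral>\<^sup>+ x. ennreal ((x i)\<^sup>2) \<partial>?M) =
        (\<integral>\<^sup>+ y. ennreal (y\<^sup>2) \<partial>distr ?M (gauss1 (q i)) (\<lambda>x. x i))"
      by (subst nn_integral_distr) auto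
    also have "\<dots> = (\<integral>\<^sup>+ y. ennreal (y\<^sup>2) \<partial>gauss1 (q i))"
      by (subst distr_PiM_component) (use q prob_space_gauss1 in auto)
    finally show "(\<integral>\<^sup>+ x. ennreal ((x i)\<^sup>2) \<partial>?M) = ennreal (q i)"
      using nn_integral_square_gauss1 q by simp
  qed
  finally have finite: "(\<integral>\<^sup>+ x. (\<Sum>i. ennreal ((x i)\<^sup>2)) \<partial>?M) \<noteq> \<top>"
    using q by (simp add: ennreal_suminf_neq_top)
  have "(\<lambda>x. \<Sum>i. ennreal ((x i)\<^sup>2)) \<in> borel_measurable ?M"
    by measurable
  from nn_integral_PInf_AE[OF this finite[folded infinity_ennreal_def]]
  have "AE x in ?M. (\<Sum>i. ennreal ((x i)\<^sup>2)) \<noteq> \<top>"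
    by (simp add: infinity_ennreal_def)
  then show ?thesis
    unfolding Hsp_eq_finite_square_sum by simp
qed

lemma space_gaussH [simp]: "space (gaussH q) = Hsp"
  by (simp add: gaussH_def space_restrict_space space_PiM)

lemma prob_space_gaussH:
  assumes "\<And>i. q i \<ge> 0" "summable q"
  shows "prob_space (gaussH q)"
  unfolding gaussH_def
proof (rule prob_space_restrict_space)
  interpret prob_space "\<Pi>\<^sub>M i\<in>UNIV. gauss1 (q i)"
    using assms(1) by (rule prob_space_PiM_gauss1)
  show "emeasure (\<Pi>\<^sub>M i\<in>UNIV. gauss1 (q i)) Hsp = 1"
    by (rule emeasure_eq_1_AE[OF Hsp_in_sets_PiM_gauss1 AE_PiM_gauss1_Hsp[OF assms]])
qed (rule Hsp_in_sets_PiM_gauss1)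

lemma integral_gaussH_coordinate:
  fixes f :: "real \<Rightarrow> real"
  assumes q: "\<And>i. q i \<ge> 0" "summable q" and f[measurable]: "f \<in> borel_measurable borel"
  shows "(\<integral>x. f (x i) \<partial>gaussH q) = (\<integral>y. f y \<partial>gauss1 (q i))"
proof -
  let ?M = "\<Pi>\<^sub>M i\<in>UNIV. gauss1 (q i)"
  have [measurable]: "Hsp \<in> sets ?M" by (rule Hsp_in_sets_PiM_gauss1)
  have "(\<integral>x. f (x i) \<partial>gaussH q) = (\<integral>x. indicator Hsp x *\<^sub>R f (x i) \<partial>?M)"
    unfolding gaussH_def by (subst integral_restrict_space) (auto simp: space_PiM)
  also have "\<dots> = (\<integral>x. f (x i) \<partial>?M)"
    using AE_PiM_gauss1_Hsp[OF q] by (intro integral_cong_AE) auto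
  also have "\<dots> = (\<integral>y. f y \<partial>distr ?M (gauss1 (q i)) (\<lambda>x. x i))"
    by (subst integral_distr) auto
  also have "\<dots> = (\<integral>y. f y \<partial>gauss1 (q i))"
    by (subst distr_PiM_component) (use q prob_space_gauss1 in auto)
  finally show ?thesis .
qed

lemma (in prob_space) abs_integral_le_1:
  fixes f :: "'a \<Rightarrow> real"
  assumes "\<forall>x\<in>space M. \<bar>f x\<bar> \<le> 1"
  shows "\<bar>\<integral>x. f x \<partial>M\<bar> \<le> 1"
proof (cases "integrable M f")
  case True
  have "\<bar>\<integral>x. f x \<partial>M\<bar> \<le> (\<integral>x. \<bar>f x\<bar> \<partial>M)"
    using integral_abs_bound[of M f] by simp
  also have "\<dots> \<le> 1"
    using True assms by (intro integral_le_const) (auto intro: AE_I2)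
  finally show ?thesis .
qed (simp add: not_integrable_integral_eq)

lemma C0dist_ge:
  assumes "prob_space P" "space P = Hsp" "prob_space Q" "space Q = Hsp"
    and "H_continuous \<phi>" "\<forall>x\<in>Hsp. \<bar>\<phi> x\<bar> \<le> 1"
  shows "\<bar>(\<integral>x. \<phi> x \<partial>P) - (\<integral>x. \<phi> x \<partial>Q)\<bar> \<le> C0dist P Q"
  unfolding C0dist_def
proof (rule cSup_upper)
  show "bdd_above {\<bar>(\<integral>x. \<phi> x \<partial>P) - (\<integral>x. \<phi> x \<partial>Q)\<bar> | \<phi>.
      H_continuous \<phi> \<and> (\<forall>x\<in>Hsp. \<bar>\<phi> x\<bar> \<le> 1)}"
  proof (rule bdd_aboveI[where M=2], safe)
    fix \<psi> :: "(nat \<Rightarrow> real) \<Rightarrow> real"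
    assume "\<forall>x\<in>Hsp. \<bar>\<psi> x\<bar> \<le> 1"
    then have "\<bar>\<integral>x. \<psi> x \<partial>P\<bar> \<le> 1" "\<bar>\<integral>x. \<psi> x \<partial>Q\<bar> \<le> 1"
      using assms(1-4) prob_space.abs_integral_le_1 by metis+
    then show "\<bar>(\<integral>x. \<psi> x \<partial>P) - (\<integral>x. \<psi> x \<partial>Q)\<bar> \<le> 2" by linarith
  qed
qed (use assms(5,6) in blast)

lemma abs_cos_diff_le: fixes a b :: real shows "\<bar>cos a - cos b\<bar> \<le> \<bar>a - b\<bar>"
proof -
  have "\<bar>cos a - cos b\<bar> = 2 * \<bar>sin ((a + b) / 2)\<bar> * \<bar>sin ((b - a) / 2)\<bar>"
    by (simp add: cos_diff_cos abs_mult)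
  also have "\<dots> \<le> 2 * 1 * \<bar>(b - a) / 2\<bar>"
    by (intro mult_mono abs_sin_x_le_abs_x) auto
  finally show ?thesis by simp
qed

lemma abs_coordinate_diff_le_Hdist:
  assumes "x \<in> Hsp" "y \<in> Hsp"
  shows "\<bar>x i - y i\<bar> \<le> Hdist x y"
proof -
  have bound_summable: "summable (\<lambda>j. 2 * (x j)\<^sup>2 + 2 * (y j)\<^sup>2)"
    using assms by (intro summable_add summable_mult) (auto simp: Hsp_def)
  have bound: "(x j - y j)\<^sup>2 \<le> 2 * (x j)\<^sup>2 + 2 * (y j)\<^sup>2" for j
  proof -
    have "(x j - y j)\<^sup>2 = 2 * (x j)\<^sup>2 + 2 * (y j)\<^sup>2 - (x j + y j)\<^sup>2"
      by (simp add: power2_eq_square algebra_simps)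
    then show ?thesis by simp
  qed
  have "summable (\<lambda>j. (x j - y j)\<^sup>2)"
    by (rule summable_comparison_test'[OF bound_summable, where N=0]) (simp add: bound)
  from sum_le_suminf[OF this, of "{i}"]
  have "(x i - y i)\<^sup>2 \<le> (\<Sum>j. (x j - y j)\<^sup>2)" by simp
  then have "sqrt ((x i - y i)\<^sup>2) \<le> Hdist x y"
    unfolding Hdist_def by (rule real_sqrt_le_mono)
  then show ?thesis by simp
qed

lemma H_continuous_cos_coordinate: "H_continuous (\<lambda>x. cos (t * x i))"
  unfolding H_continuous_def
proof (intro ballI allI impI)
  fix x and e :: real
  assume x: "x \<in> Hsp" and e: "e > 0"
  show "\<exists>d>0. \<forall>y\<in>Hsp. Hdist x y < d \<longrightarrow> \<bar>cos (t * y i) - cos (t * x i)\<bar> < e"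
  proof (intro exI[of _ "e / (\<bar>t\<bar> + 1)"] conjI ballI impI)
    show "e / (\<bar>t\<bar> + 1) > 0" using e by simp
    fix y
    assume y: "y \<in> Hsp" and close: "Hdist x y < e / (\<bar>t\<bar> + 1)"
    have "\<bar>cos (t * y i) - cos (t * x i)\<bar> \<le> \<bar>t\<bar> * \<bar>x i - y i\<bar>"
      using abs_cos_diff_le[of "t * y i" "t * x i"]
      by (simp add: abs_mult right_diff_distrib[symmetric] abs_minus_commute)
    also have "\<dots> \<le> (\<bar>t\<bar> + 1) * Hdist x y"
      using abs_coordinate_diff_le_Hdist[OF x y, of i] by (intro mult_mono) auto
    also have "\<dots> < e"
      using close by (simp add: field_simps add_pos_nonneg)
    finally show "\<bar>cos (t * y i) - cos (t * x i)\<bar> < e" .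
  qed
qed

lemma C0dist_gaussH_ge_half:
  assumes q: "\<And>i. q i \<ge> 0" "summable q" and r: "\<And>i. r i \<ge> 0" "summable r"
    and qi: "q i > 0" and ri: "r i \<le> q i / 16"
  shows "1/2 \<le> C0dist (gaussH q) (gaussH r)"
proof -
  define t where "t = sqrt (2 * ln 4 / q i)"
  have t2: "t\<^sup>2 = 2 * ln 4 / q i"
    unfolding t_def using qi by simp
  have mean_q: "(\<integral>x. cos (t * x i) \<partial>gaussH q) = 1/4"
    using integral_gaussH_coordinate[OF q, of "\<lambda>y. cos (t * y)" i]
      integral_cos_gauss1[OF q(1)[of i], of t] t2 qi
    by (simp add: exp_minus)
  have mean_r: "(\<integral>x. cos (t * x i) \<partial>gaussH r) = exp (- (ln 4 * (r i / q i)))"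
    using integral_gaussH_coordinate[OF r, of "\<lambda>y. cos (t * y)" i]
      integral_cos_gauss1[OF r(1)[of i], of t] t2 qi
    by (simp add: field_simps)
  have "ln (4::real) = 2 * ln 2"
    using ln_realpow[of 2 2] by simp
  then have "ln 4 * (r i / q i) \<le> 2 * (1/16)"
    using ln_2_less_1 ri qi r(1)[of i] by (intro mult_mono) (auto simp: divide_simps)
  then have "7/8 \<le> exp (- (ln 4 * (r i / q i)))"
    using exp_ge_add_one_self[of "- (ln 4 * (r i / q i))"] by simp
  then have "1/2 \<le> \<bar>(\<integral>x. cos (t * x i) \<partial>gaussH q) - (\<integral>x. cos (t * x i) \<partial>gaussH r)\<bar>"
    unfolding mean_q mean_r by simp
  also have "\<dots> \<le> C0dist (gaussH q) (gaussH r)"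
    using prob_space_gaussH[OF q] prob_space_gaussH[OF r]
    by (intro C0dist_ge H_continuous_cos_coordinate) auto
  finally show ?thesis .
qed

lemma eig_ge_square: "eig i \<ge> (real (Suc i))\<^sup>2"
  using pi_gt3 by (simp add: eig_def)

lemma eig_pos: "eig i > 0"
  by (simp add: eig_def)

lemma summable_inverse_eig: "summable (\<lambda>i. 1 / eig i)"
proof (rule summable_comparison_test'[where N=0])
  have "summable (\<lambda>n. inverse (real n ^ 2))"
    by (rule inverse_power_summable) simp
  then show "summable (\<lambda>i. inverse ((real (Suc i))\<^sup>2))"
    by (subst summable_Suc_iff)
  show "norm (1 / eig i) \<le> inverse ((real (Suc i))\<^sup>2)" for i
    using eig_ge_square[of i] eig_pos[of i] by (simp add: inverse_eq_divide frac_le)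
qed

definition mu_var :: "real \<Rightarrow> nat \<Rightarrow> real" where
  "mu_var T i = (1 - exp (- 2 * eig i * T)) / (2 * eig i)"

definition nu_var :: "real \<Rightarrow> nat \<Rightarrow> nat \<Rightarrow> real" where
  "nu_var dt k i = dt * (\<Sum>l<k. (1 / (1 + dt * eig i)) ^ (2 * (k - l)))"

lemma mu_eq_gaussH_mu_var: "mu T = gaussH (mu_var T)"
  by (simp add: mu_def mu_var_def[abs_def])

lemma muN_eq_gaussH: "muN N T = gaussH (\<lambda>i. if i < N then mu_var T i else 0)"
  unfolding muN_def mu_var_def by (rule refl)

lemma nu_eq_gaussH_nu_var: "nu dt k = gaussH (nu_var dt k)"
  by (simp add: nu_def nu_var_def[abs_def])

lemma mu_var_pos: "T > 0 \<Longrightarrow> mu_var T i > 0"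
  using eig_pos[of i] by (simp add: mu_var_def)

lemma mu_var_ge:
  assumes "T > 0"
  shows "(1 - exp (- 2 * pi\<^sup>2 * T)) / (2 * eig i) \<le> mu_var T i"
proof -
  have "pi\<^sup>2 \<le> eig i" by (simp add: eig_def)
  then have "exp (- 2 * eig i * T) \<le> exp (- 2 * pi\<^sup>2 * T)"
    using assms by (simp add: mult_right_mono)
  then show ?thesis
    unfolding mu_var_def using eig_pos[of i] by (intro divide_right_mono) auto
qed

lemma summable_mu_var: "T > 0 \<Longrightarrow> summable (mu_var T)"
proof (rule summable_comparison_test'[OF summable_inverse_eig, where N=0])
  fix i
  assume "T > 0"
  have "mu_var T i \<le> 1 / (2 * eig i)"
    using eig_pos[of i] by (simp add: mu_var_def divide_right_mono)
  also have "\<dots> \<le> 1 / eig i"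
    using eig_pos[of i] by (simp add: divide_simps)
  finally show "norm (mu_var T i) \<le> 1 / eig i"
    using mu_var_pos[OF \<open>T > 0\<close>, of i] by simp
qed

lemma nu_var_nonneg: "dt > 0 \<Longrightarrow> nu_var dt k i \<ge> 0"
  using eig_pos[of i] by (auto simp: nu_var_def intro!: mult_nonneg_nonneg sum_nonneg)

text \<open>Each of the \<open>k\<close> summands is at most \<open>(\<Delta>t \<lambda>\<^sub>i)\<^sup>-\<^sup>2\<close>, and \<open>k \<Delta>t \<le> T\<close>.\<close>
lemma nu_var_le:
  assumes dt: "dt > 0" and k: "dt * real k \<le> T"
  shows "nu_var dt k i \<le> T / (dt * eig i)\<^sup>2"
proof -
  define s where "s = 1 / (1 + dt * eig i)"
  have de: "0 < dt * eig i" using dt eig_pos[of i] by simp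
  have "0 \<le> dt * real k" using dt by simp
  then have T: "0 \<le> T" using k by linarith
  have s: "0 \<le> s" "s \<le> 1" "s \<le> 1 / (dt * eig i)"
    using de by (auto simp: s_def divide_simps)
  have "(\<Sum>l<k. s ^ (2 * (k - l))) \<le> (\<Sum>l<k. s\<^sup>2)"
    by (intro sum_mono power_decreasing s) auto
  then have "nu_var dt k i \<le> dt * (real k * s\<^sup>2)"
    unfolding nu_var_def s_def[symmetric] using dt by (intro mult_left_mono) auto
  also have "\<dots> = (dt * real k) * s\<^sup>2" by simp
  also have "\<dots> \<le> T * (1 / (dt * eig i))\<^sup>2"
    using k s T by (intro mult_mono power_mono) auto
  finally show ?thesis by (simp add: power_divide)
qed

lemma summable_nu_var:
  assumes dt: "dt > 0" and k: "dt * real k \<le> T"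
  shows "summable (nu_var dt k)"
proof (rule summable_comparison_test'[OF summable_mult[OF summable_inverse_eig], where N=0])
  fix i
  have "0 \<le> dt * real k" using dt by simp
  then have T: "0 \<le> T / dt\<^sup>2" using k by simp
  have "1 \<le> eig i"
    using eig_ge_square[of i] one_le_power[of "real (Suc i)" 2] by linarith
  then have "1 / eig i \<le> 1" by simp
  moreover have "0 \<le> T / dt\<^sup>2 * (1 / eig i)"
    by (rule mult_nonneg_nonneg) (use T eig_pos[of i] in auto)
  ultimately have "T / dt\<^sup>2 * (1 / eig i) * (1 / eig i) \<le> T / dt\<^sup>2 * (1 / eig i) * 1"
    by (rule mult_left_mono)
  then have "T / (dt * eig i)\<^sup>2 \<le> T / dt\<^sup>2 * (1 / eig i)"
    by (simp add: power2_eq_square mult_ac)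
  then show "norm (nu_var dt k i) \<le> T / dt\<^sup>2 * (1 / eig i)"
    using nu_var_le[OF dt k, of i] nu_var_nonneg[OF dt, of k i] by simp
qed

lemma C0dist_mu_muN_ge_half:
  assumes "T > 0"
  shows "1/2 \<le> C0dist (mu T) (muN N T)"
  unfolding mu_eq_gaussH_mu_var muN_eq_gaussH
proof (rule C0dist_gaussH_ge_half[where i=N])
  show "summable (\<lambda>i. if i < N then mu_var T i else 0)"
    by (rule summable_comparison_test'[OF summable_mu_var[OF assms], where N=0])
      (use mu_var_pos[OF assms] in \<open>auto simp: less_imp_le\<close>)
qed (use mu_var_pos[OF assms] summable_mu_var[OF assms] in \<open>auto simp: less_imp_le\<close>)

lemma C0dist_mu_nu_ge_half:
  assumes T: "T > 0" and dt: "0 < dt" "dt \<le> T"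
  shows "1/2 \<le> C0dist (mu T) (nu dt (nat \<lfloor>T / dt\<rfloor>))"
proof -
  define k where "k = nat \<lfloor>T / dt\<rfloor>"
  have "real k \<le> T / dt"
    using T dt by (simp add: k_def)
  then have k: "dt * real k \<le> T"
    using dt by (simp add: field_simps)
  define A where "A = 1 - exp (- 2 * pi\<^sup>2 * T)"
  have A: "A > 0" unfolding A_def using T by simp
  obtain n :: nat where n: "32 * T / (A * dt\<^sup>2) < real n"
    using reals_Archimedean2 by blast
  have "n \<le> Suc n ^ 2" by (simp add: power2_eq_square)
  then have "real n \<le> (real (Suc n))\<^sup>2" by (metis of_nat_le_iff of_nat_power)
  then have "32 * T / (A * dt\<^sup>2) \<le> eig n"
    using n eig_ge_square[of n] by linarith
  then have high_mode: "32 * T \<le> A * dt\<^sup>2 * eig n"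
    using A dt by (simp add: pos_divide_le_eq mult.commute)
  have "nu_var dt k n \<le> T / (dt * eig n)\<^sup>2"
    by (rule nu_var_le[OF dt(1) k])
  also have "\<dots> = 32 * T / (32 * (dt * eig n)\<^sup>2)" by simp
  also have "\<dots> \<le> (A * dt\<^sup>2 * eig n) / (32 * (dt * eig n)\<^sup>2)"
    using high_mode by (rule divide_right_mono) simp
  also have "\<dots> = A / (2 * eig n) / 16"
    using dt eig_pos[of n] by (simp add: power2_eq_square field_simps)
  also have "\<dots> \<le> mu_var T n / 16"
    using mu_var_ge[OF T, of n] unfolding A_def by (intro divide_right_mono) auto
  finally have "nu_var dt k n \<le> mu_var T n / 16" .
  then have "1/2 \<le> C0dist (gaussH (mu_var T)) (gaussH (nu_var dt k))"
    using mu_var_pos[OF T] summable_mu_var[OF T] nu_var_nonneg[OF dt(1)]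
      summable_nu_var[OF dt(1) k]
    by (intro C0dist_gaussH_ge_half) (auto simp: less_imp_le)
  then show ?thesis
    by (simp add: k_def mu_eq_gaussH_mu_var nu_eq_gaussH_nu_var)
qed

theorem theorem3p1:
  fixes T :: real
  assumes "T > 0"
  shows "limsup (\<lambda>N. ereal (C0dist (mu T) (muN N T))) > 0 \<and>
         Limsup (at_right 0) (\<lambda>dt. ereal (C0dist (mu T) (nu dt (nat \<lfloor>T / dt\<rfloor>)))) > 0"
proof
  have "ereal (1/2) \<le> limsup (\<lambda>N. ereal (C0dist (mu T) (muN N T)))"
    by (rule le_Limsup) (use C0dist_mu_muN_ge_half[OF assms] in auto)
  then show "limsup (\<lambda>N. ereal (C0dist (mu T) (muN N T))) > 0"
    by (rule less_le_trans[rotated]) simp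
next
  have "eventually (\<lambda>dt. ereal (1/2) \<le> ereal (C0dist (mu T) (nu dt (nat \<lfloor>T / dt\<rfloor>))))
      (at_right 0)"
    unfolding eventually_at_right_field
    by (rule exI[of _ T]) (use assms C0dist_mu_nu_ge_half[OF assms] in auto)
  then have "ereal (1/2) \<le> Limsup (at_right 0) (\<lambda>dt. ereal (C0dist (mu T) (nu dt (nat \<lfloor>T / dt\<rfloor>))))"
    by (rule le_Limsup[rotated]) simp
  then show "Limsup (at_right 0) (\<lambda>dt. ereal (C0dist (mu T) (nu dt (nat \<lfloor>T / dt\<rfloor>)))) > 0"
    by (rule less_le_trans[rotated]) simp
qed

end
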